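(* Let $\mathcal M=\{\rho_\theta:\theta\in\Theta\}$ be a two-parameter qubit model satisfying the regularity conditions and $\theta\in\Theta$. Then $C_\theta^H[W]=C_\theta^R[W]$ for all $2\times2$ real positive definite matrices $W$ if and only if $\mathcal M$ is D-invariant at $\theta$.
   Context: Two-parameter qubit model: density matrices $\rho_\theta$ on $\mathbb C^2$, $\theta=(\theta^1,\theta^2)\in\Theta\subset\mathbb R^2$ open; regularity: each $\rho_\theta$ strictly positive, smooth in $\theta$, $\partial_1\rho_\theta,\partial_2\rho_\theta$ linearly independent ($\partial_i=\partial/\partial\theta^i$). SLD operators $L_{\theta,i}$ (hermitian, $\partial_i\rho_\theta=\tfrac12(\rho_\theta L_{\theta,i}+L_{\theta,i}\rho_\theta)$), RLD operators $\tilde L_{\theta,i}$ ($\partial_i\rho_\theta=\rho_\theta\tilde L_{\theta,i}$); RLD Fisher matrix $\tilde G_\theta=[\mathrm{tr}(\rho_\theta\tilde L_{\theta,j}\tilde L_{\theta,i}^* )]$; $\mathrm{Re},\mathrm{Im}$ of $\tilde G_\theta^{-1}$ are entrywise; $\mathrm{TrAbs}$ of a diagonalizable matrix is the sum of absolute values of its eigenvalues. RLD CR bound: $C_\theta^R[W]=\mathrm{Tr}(W\,\mathrm{Re}\,\tilde G_\theta^{-1})+\mathrm{TrAbs}(W\,\mathrm{Im}\,\tilde G_\theta^{-1})$. Holevo bound: $C_\theta^H[W]=\min_{\vec X}\{\mathrm{Tr}(W\,\mathrm{Re}\,Z_\theta[\vec X])+\mathrm{TrAbs}(W\,\mathrm{Im}\,Z_\theta[\vec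 X])\}$ over pairs $\vec X=(X^1,X^2)$ of hermitian operators with $\mathrm{tr}(\rho_\theta X^i)=0$, $\mathrm{tr}(\partial_i\rho_\theta X^j)=\delta^j_i$, where $Z_\theta[\vec X]=[\mathrm{tr}(\rho_\theta X^jX^i)]_{i,j}$. SLD inner product $\langle X,Y\rangle_\rho=\mathrm{Re}\,\mathrm{tr}(\rho YX^* )$; SLD tangent space $T_\theta(\mathcal M)=\mathrm{span}_{\mathbb R}\{L_{\theta,1},L_{\theta,2}\}$; commutation operator $\mathcal D_\theta$: real-linear map on hermitian operators with $\langle Y,\mathcal D_\theta(X)\rangle_{\rho_\theta}=\frac{1}{2\mathrm{i}}\mathrm{tr}(\rho_\theta[Y,X])$ for all hermitian $X,Y$; $\mathcal M$ is D-invariant at $\theta$ if $\mathcal D_\theta(T_\theta(\mathcal M))\subset T_\theta(\mathcal M)$. *)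

theory Defs
  imports "HOL-Analysis.Analysis" "HOL-Computational_Algebra.Polynomial"
begin

type_synonym qop = "complex^2^2"

definition cadj :: "qop \<Rightarrow> qop" where
  "cadj A = (\<chi> i j. cnj (A $ j $ i))"

definition herm :: "qop \<Rightarrow> bool" where
  "herm A \<longleftrightarrow> cadj A = A"

definition strictly_pos :: "qop \<Rightarrow> bool" where
  "strictly_pos A \<longleftrightarrow> herm A \<and>
     (\<forall>x::complex^2. x \<noteq> 0 \<longrightarrow> Re (\<Sum>i\<in>UNIV. cnj (x $ i) * (A *v x) $ i) > 0)"

definition density :: "qop \<Rightarrow> bool" where
  "density A \<longleftrightarrow> strictly_pos A \<and> trace A = 1"

coinductive smooth_on :: "'a::real_normed_vector set \<Rightarrow> ('a \<Rightarrow> 'b::real_normed_vector) \<Rightarrow> bool"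
  for S where
  "(\<forall>x\<in>S. f differentiable (at x)) \<Longrightarrow>
   (\<forall>v. smooth_on S (\<lambda>x. frechet_derivative f (at x) v)) \<Longrightarrow> smooth_on S f"

definition pd :: "(real^2 \<Rightarrow> qop) \<Rightarrow> real^2 \<Rightarrow> 2 \<Rightarrow> qop" where
  "pd \<rho> \<theta> i = frechet_derivative \<rho> (at \<theta>) (axis i 1)"

definition regular_model :: "(real^2) set \<Rightarrow> (real^2 \<Rightarrow> qop) \<Rightarrow> bool" where
  "regular_model \<Theta> \<rho> \<longleftrightarrow> open \<Theta> \<and> (\<forall>\<theta>\<in>\<Theta>. density (\<rho> \<theta>)) \<and> smooth_on \<Theta> \<rho> \<and>
     (\<forall>\<theta>\<in>\<Theta>. \<forall>a b::real. a *\<^sub>R pd \<rho> \<theta> 1 + b *\<^sub>R pd \<rho> \<theta> 2 = 0 \<longrightarrow> a = 0 \<and> b = 0)"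

definition SLD :: "(real^2 \<Rightarrow> qop) \<Rightarrow> real^2 \<Rightarrow> 2 \<Rightarrow> qop" where
  "SLD \<rho> \<theta> i = (THE L. herm L \<and>
      pd \<rho> \<theta> i = (1/2::real) *\<^sub>R (\<rho> \<theta> ** L + L ** \<rho> \<theta>))"

definition RLD :: "(real^2 \<Rightarrow> qop) \<Rightarrow> real^2 \<Rightarrow> 2 \<Rightarrow> qop" where
  "RLD \<rho> \<theta> i = (THE L. pd \<rho> \<theta> i = \<rho> \<theta> ** L)"

definition RLD_fisher :: "(real^2 \<Rightarrow> qop) \<Rightarrow> real^2 \<Rightarrow> complex^2^2" where
  "RLD_fisher \<rho> \<theta> = (\<chi> i j. trace (\<rho> \<theta> ** RLD \<rho> \<theta> j ** cadj (RLD \<rho> \<theta> i)))"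

definition ReM :: "complex^2^2 \<Rightarrow> real^2^2" where
  "ReM A = (\<chi> i j. Re (A $ i $ j))"

definition ImM :: "complex^2^2 \<Rightarrow> real^2^2" where
  "ImM A = (\<chi> i j. Im (A $ i $ j))"

definition charpoly :: "real^2^2 \<Rightarrow> complex poly" where
  "charpoly M = det ((\<chi> i j. if i = j then [:0, 1:] else 0) - (\<chi> i j. [:complex_of_real (M $ i $ j):]))"

definition TrAbs :: "real^2^2 \<Rightarrow> real" where
  "TrAbs M = sum_mset (image_mset cmod (proots (charpoly M)))"

definition RLD_bound :: "(real^2 \<Rightarrow> qop) \<Rightarrow> real^2 \<Rightarrow> real^2^2 \<Rightarrow> real" where
  "RLD_bound \<rho> \<theta> W = trace (W ** ReM (matrix_inv (RLD_fisher \<rho> \<theta>)))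
      + TrAbs (W ** ImM (matrix_inv (RLD_fisher \<rho> \<theta>)))"

definition Zmat :: "(real^2 \<Rightarrow> qop) \<Rightarrow> real^2 \<Rightarrow> (2 \<Rightarrow> qop) \<Rightarrow> complex^2^2" where
  "Zmat \<rho> \<theta> X = (\<chi> i j. trace (\<rho> \<theta> ** X j ** X i))"

definition loc_unbiased :: "(real^2 \<Rightarrow> qop) \<Rightarrow> real^2 \<Rightarrow> (2 \<Rightarrow> qop) \<Rightarrow> bool" where
  "loc_unbiased \<rho> \<theta> X \<longleftrightarrow> (\<forall>i. herm (X i) \<and> trace (\<rho> \<theta> ** X i) = 0) \<and>
     (\<forall>i j. trace (pd \<rho> \<theta> i ** X j) = (if i = j then 1 else 0))"

definition Holevo_bound :: "(real^2 \<Rightarrow> qop) \<Rightarrow> real^2 \<Rightarrow> real^2^2 \<Rightarrow> real" where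
  "Holevo_bound \<rho> \<theta> W = Inf {trace (W ** ReM (Zmat \<rho> \<theta> X)) + TrAbs (W ** ImM (Zmat \<rho> \<theta> X))
      | X. loc_unbiased \<rho> \<theta> X}"

definition sld_ip :: "qop \<Rightarrow> qop \<Rightarrow> qop \<Rightarrow> real" where
  "sld_ip \<rho> X Y = Re (trace (\<rho> ** Y ** cadj X))"

definition comm_op :: "(real^2 \<Rightarrow> qop) \<Rightarrow> real^2 \<Rightarrow> qop \<Rightarrow> qop" where
  "comm_op \<rho> \<theta> X = (THE Z. herm Z \<and> (\<forall>Y. herm Y \<longrightarrow>
      complex_of_real (sld_ip (\<rho> \<theta>) Y Z) = trace (\<rho> \<theta> ** (Y ** X - X ** Y)) / (2 * \<i>)))"

definition SLD_tangent :: "(real^2 \<Rightarrow> qop) \<Rightarrow> real^2 \<Rightarrow> qop set" where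
  "SLD_tangent \<rho> \<theta> = span {SLD \<rho> \<theta> 1, SLD \<rho> \<theta> 2}"

definition D_invariant :: "(real^2 \<Rightarrow> qop) \<Rightarrow> real^2 \<Rightarrow> bool" where
  "D_invariant \<rho> \<theta> \<longleftrightarrow> comm_op \<rho> \<theta> ` SLD_tangent \<rho> \<theta> \<subseteq> SLD_tangent \<rho> \<theta>"

definition real_posdef :: "real^2^2 \<Rightarrow> bool" where
  "real_posdef W \<longleftrightarrow> transpose W = W \<and> (\<forall>x::real^2. x \<noteq> 0 \<longrightarrow> x \<bullet> (W *v x) > 0)"

end

theory Submission
  imports Defs
begin

unbundle cross3_syntax

text \<open>
  Write every hermitian operator as \<open>a I + x\<cdot>\<sigma>\<close> with the Pauli vector \<open>\<sigma>\<close>. At \<open>\<theta>\<close> the state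
  is \<open>(I + s\<cdot>\<sigma>)/2\<close> with \<open>|s| < 1\<close> and \<open>\<partial>\<^sub>i\<rho> = d\<^sub>i\<cdot>\<sigma>/2\<close> with \<open>n = d\<^sub>1 \<times> d\<^sub>2 \<noteq> 0\<close>. The
  commutation operator maps \<open>a I + x\<cdot>\<sigma>\<close> to \<open>(x \<times> s)\<cdot>\<sigma>\<close>, so D-invariance means \<open>s \<bottom> d\<^sub>1, d\<^sub>2\<close>.
  Locally unbiased pairs correspond to vectors \<open>x\<^sub>j\<close> dual to the \<open>d\<^sub>i\<close>; they differ from the
  reciprocal basis only by multiples of \<open>n\<close>, and completing the square in these multiples bounds
  the real part of the Holevo objective from below by
  \<open>((1 - |s|\<^sup>2) tr(W adj G) + w(s\<cdot>d\<^sub>2, -s\<cdot>d\<^sub>1)) / (|n|\<^sup>2 - (s\<cdot>n)\<^sup>2)\<close>, where \<open>G\<close> is the Gram matrix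
  of the \<open>d\<^sub>i\<close> and \<open>w\<close> the quadratic form of \<open>W\<close>. If \<open>s \<bottom> d\<^sub>i\<close> this bound is attained by the
  reciprocal basis and the imaginary part is the same for every dual pair, which gives exactly the
  RLD bound. Otherwise the second summand beats the imaginary part of the RLD bound for a weight
  \<open>W\<close> stretched along \<open>(s\<cdot>d\<^sub>2, -s\<cdot>d\<^sub>1)\<close>.
\<close>

section \<open>Bloch representation of qubit operators\<close>

text \<open>\<open>bloch a x = a I + x$1 \<sigma>\<^sub>x + x$2 \<sigma>\<^sub>y + x$3 \<sigma>\<^sub>z\<close>.\<close>
definition bloch :: "real \<Rightarrow> real^3 \<Rightarrow> qop" where
  "bloch a x = (\<chi> i j. if i = 1 then (if j = 1 then complex_of_real (a + x$3) else Complex (x$1) (- x$2))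
                    else (if j = 1 then Complex (x$1) (x$2) else complex_of_real (a - x$3)))"

lemma bloch_nth:
  "bloch a x $ 1 $ 1 = complex_of_real (a + x$3)" "bloch a x $ 1 $ 2 = Complex (x$1) (- x$2)"
  "bloch a x $ 2 $ 1 = Complex (x$1) (x$2)" "bloch a x $ 2 $ 2 = complex_of_real (a - x$3)"
  by (simp_all add: bloch_def)

lemmas bloch_entry_simps = complex_eq_iff sum_2 sum_3 inner_vec_def cross3_def trace_def
  matrix_matrix_mult_def bloch_nth

lemma trace_bloch: "trace (bloch a x) = complex_of_real (2 * a)"
  by (simp add: bloch_entry_simps)

lemma trace_bloch_mult: "trace (bloch a x ** bloch b y) = complex_of_real (2 * (a * b + x \<bullet> y))"
  by (simp add: bloch_entry_simps algebra_simps)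

lemma trace_bloch_mult3:
  "trace (bloch a x ** bloch b y ** bloch c z) =
     complex_of_real (2 * (a * b * c + c * (x \<bullet> y) + a * (y \<bullet> z) + b * (x \<bullet> z)))
     + \<i> * complex_of_real (2 * (x \<bullet> (y \<times> z)))"
  by (simp add: bloch_entry_simps algebra_simps)

lemma trace_bloch_commutator:
  "trace (bloch a x ** (bloch b y ** bloch c z - bloch c z ** bloch b y))
     = \<i> * complex_of_real (4 * (x \<bullet> (y \<times> z)))"
  by (simp add: bloch_entry_simps algebra_simps)

lemma bloch_anticommutator:
  "bloch a x ** bloch b y + bloch b y ** bloch a x = 2 *\<^sub>R bloch (a * b + x \<bullet> y) (a *\<^sub>R y + b *\<^sub>R x)"
  by (simp add: vec_eq_iff forall_2 bloch_entry_simps algebra_simps)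

lemma herm_bloch: "herm (bloch a x)"
  by (simp add: herm_def cadj_def vec_eq_iff forall_2 bloch_nth complex_eq_iff)

lemma cadj_bloch [simp]: "cadj (bloch a x) = bloch a x"
  using herm_bloch by (simp add: herm_def)

lemma bloch_eq_iff [simp]: "bloch a x = bloch b y \<longleftrightarrow> a = b \<and> x = y"
proof
  assume h: "bloch a x = bloch b y"
  have "bloch a x $ i $ j = bloch b y $ i $ j" for i j using h by simp
  from this[of 1 1] this[of 1 2] this[of 2 2]
  have "a + x$3 = b + y$3" "x$1 = y$1" "x$2 = y$2" "a - x$3 = b - y$3"
    by (simp_all add: bloch_nth complex_eq_iff)
  then show "a = b \<and> x = y" by (auto simp: vec_eq_iff forall_3)
qed simp

lemma bloch_add: "bloch a x + bloch b y = bloch (a + b) (x + y)"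
  by (simp add: vec_eq_iff forall_2 bloch_nth complex_eq_iff)

lemma scaleR_bloch: "r *\<^sub>R bloch a x = bloch (r * a) (r *\<^sub>R x)"
  by (simp add: vec_eq_iff forall_2 bloch_nth complex_eq_iff algebra_simps)

lemma bloch_zero: "bloch 0 0 = 0"
  by (simp add: vec_eq_iff forall_2 bloch_nth complex_eq_iff)

lemma herm_obtain_bloch:
  assumes "herm X"
  obtains a x where "X = bloch a x"
proof -
  have h: "cadj X = X" using assms by (simp add: herm_def)
  have e: "cnj (X$j$i) = X$i$j" for i j
    using arg_cong[OF h, of "\<lambda>M. M$i$j"] by (simp add: cadj_def)
  from e[of 1 1] e[of 2 2] e[of 1 2]
  have r: "Im (X$1$1) = 0" "Im (X$2$2) = 0" "X$2$1 = cnj (X$1$2)"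
    by (auto simp: complex_eq_iff)
  define x :: "real^3" where "x = vector [Re (X$1$2), - Im (X$1$2), (Re (X$1$1) - Re (X$2$2))/2]"
  have "X = bloch ((Re (X$1$1) + Re (X$2$2))/2) x"
    using r by (simp add: vec_eq_iff forall_2 bloch_nth complex_eq_iff x_def field_simps)
  then show ?thesis by (rule that)
qed

lemma bloch_one: "bloch 1 0 = mat 1"
  by (simp add: vec_eq_iff forall_2 bloch_nth mat_def complex_eq_iff)

lemma bloch_mult_parallel:
  "bloch a (r *\<^sub>R x) ** bloch b (t *\<^sub>R x) = bloch (a * b + r * t * (x \<bullet> x)) ((a * t + b * r) *\<^sub>R x)"
  by (simp add: vec_eq_iff forall_2 bloch_entry_simps algebra_simps)

lemma bloch_state_inverse:
  assumes "x \<bullet> x \<noteq> 1"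
  defines "P \<equiv> bloch (2 / (1 - x \<bullet> x)) ((-2 / (1 - x \<bullet> x)) *\<^sub>R x)"
  shows "bloch (1/2) ((1/2) *\<^sub>R x) ** P = mat 1" and "P ** bloch (1/2) ((1/2) *\<^sub>R x) = mat 1"
proof -
  have k: "1 - x \<bullet> x \<noteq> 0" using assms by simp
  have "bloch (1/2) ((1/2) *\<^sub>R x) ** P
      = bloch (1/2 * (2 / (1 - x \<bullet> x)) + 1/2 * (-2 / (1 - x \<bullet> x)) * (x \<bullet> x))
          ((1/2 * (-2 / (1 - x \<bullet> x)) + 2 / (1 - x \<bullet> x) * (1/2)) *\<^sub>R x)"
    unfolding P_def by (rule bloch_mult_parallel)
  also have "\<dots> = mat 1" using k by (simp add: bloch_one field_simps)
  finally show "bloch (1/2) ((1/2) *\<^sub>R x) ** P = mat 1" .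
  have "P ** bloch (1/2) ((1/2) *\<^sub>R x)
      = bloch (2 / (1 - x \<bullet> x) * (1/2) + -2 / (1 - x \<bullet> x) * (1/2) * (x \<bullet> x))
          ((2 / (1 - x \<bullet> x) * (1/2) + 1/2 * (-2 / (1 - x \<bullet> x))) *\<^sub>R x)"
    unfolding P_def by (rule bloch_mult_parallel)
  also have "\<dots> = mat 1" using k by (simp add: bloch_one field_simps)
  finally show "P ** bloch (1/2) ((1/2) *\<^sub>R x) = mat 1" .
qed

lemma density_obtain_bloch:
  assumes "density A"
  obtains s where "A = bloch (1/2) ((1/2) *\<^sub>R s)" and "s \<bullet> s < 1"
proof -
  have "herm A" and tr: "trace A = 1"
    and pos: "\<And>x::complex^2. x \<noteq> 0 \<Longrightarrow> Re (\<Sum>i\<in>UNIV. cnj (x $ i) * (A *v x) $ i) > 0"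
    using assms by (auto simp: density_def strictly_pos_def)
  then obtain a v where A: "A = bloch a v" by (blast elim: herm_obtain_bloch)
  have a: "a = 1/2" using tr unfolding A trace_bloch of_real_eq_1_iff by simp
  have "(vector [1, 0] :: complex^2) \<noteq> 0" by (auto simp: vec_eq_iff forall_2)
  from pos[OF this] have v3: "a + v$3 > 0"
    by (simp add: A sum_2 matrix_vector_mult_def bloch_nth)
  \<comment> \<open>test vector orthogonal to the first row of \<open>A\<close>\<close>
  have "(vector [- A$1$2, A$1$1] :: complex^2) \<noteq> 0"
    using v3 by (auto simp: A vec_eq_iff forall_2 bloch_nth complex_eq_iff)
  from pos[OF this] have "(a + v$3) * ((a + v$3) * (a - v$3) - (v$1)^2 - (v$2)^2) > 0"
    by (simp add: A sum_2 matrix_vector_mult_def bloch_nth algebra_simps power2_eq_square)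
  then have "(a + v$3) * (a - v$3) - (v$1)^2 - (v$2)^2 > 0"
    using v3 by (simp add: zero_less_mult_iff)
  then have "(2 *\<^sub>R v) \<bullet> (2 *\<^sub>R v) < 1"
    using a by (simp add: inner_vec_def sum_3 algebra_simps power2_eq_square)
  moreover have "A = bloch (1/2) ((1/2) *\<^sub>R (2 *\<^sub>R v))" by (simp add: A a)
  ultimately show ?thesis using that by blast
qed

lemma cadj_mult: "cadj (A ** B) = cadj B ** cadj A"
  by (simp add: cadj_def vec_eq_iff forall_2 matrix_matrix_mult_def sum_2 mult.commute)

lemma bounded_linear_cadj: "bounded_linear cadj"
proof -
  have "linear cadj" by (rule linearI) (simp_all add: cadj_def vec_eq_iff complex_eq_iff)
  then show ?thesis using linear_conv_bounded_linear by blast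
qed

lemma bounded_linear_trace: "bounded_linear (trace :: qop \<Rightarrow> complex)"
proof -
  have "linear (trace :: qop \<Rightarrow> complex)"
    by (rule linearI) (simp_all add: trace_def sum_2 complex_eq_iff algebra_simps)
  then show ?thesis using linear_conv_bounded_linear by blast
qed

lemma span_pair_iff: "X \<in> span {A, B} \<longleftrightarrow> (\<exists>u v. X = u *\<^sub>R A + v *\<^sub>R B)"
proof -
  have "X \<in> span {A, B} \<longleftrightarrow> (\<exists>u v. X - u *\<^sub>R A = v *\<^sub>R B)"
    by (auto simp add: real_vector.span_breakdown_eq real_vector.span_singleton)
  then show ?thesis by (simp add: diff_eq_eq add.commute)
qed

section \<open>Real $2 \times 2$ matrices\<close>

definition qform :: "real^2^2 \<Rightarrow> real \<Rightarrow> real \<Rightarrow> real" where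
  "qform W u v = W$1$1 * u^2 + 2 * W$1$2 * u * v + W$2$2 * v^2"

lemma real_posdef_sym:
  assumes "real_posdef W"
  shows "W$1$2 = W$2$1"
proof -
  have "transpose W $ 2 $ 1 = W $ 2 $ 1" using assms by (simp add: real_posdef_def)
  then show ?thesis by (simp add: transpose_def)
qed

lemma real_posdef_qform_pos:
  assumes "real_posdef W" and "u \<noteq> 0 \<or> v \<noteq> 0"
  shows "qform W u v > 0"
proof -
  have "(vector [u, v] :: real^2) \<noteq> 0" using assms(2) by (auto simp: vec_eq_iff forall_2)
  then have "vector [u, v] \<bullet> (W *v vector [u, v]) > 0" using assms(1) by (simp add: real_posdef_def)
  moreover have "vector [u, v] \<bullet> (W *v vector [u, v]) = qform W u v"
    using real_posdef_sym[OF assms(1)]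
    by (simp add: qform_def inner_vec_def sum_2 matrix_vector_mult_def algebra_simps power2_eq_square)
  ultimately show ?thesis by simp
qed

lemma real_posdef_qform_nonneg:
  assumes "real_posdef W"
  shows "qform W u v \<ge> 0"
proof (cases "u = 0 \<and> v = 0")
  case False
  then have "qform W u v > 0" using real_posdef_qform_pos[OF assms] by blast
  then show ?thesis by simp
next
  case True
  then show ?thesis by (simp add: qform_def)
qed

lemma real_posdef_det_nonneg:
  assumes "real_posdef W"
  shows "det W \<ge> 0"
proof -
  have "W$1$1 > 0" using real_posdef_qform_pos[OF assms, of 1 0] by (simp add: qform_def)
  moreover have "W$1$1 * det W = qform W (- W$1$2) (W$1$1)"
    using real_posdef_sym[OF assms] unfolding det_2 qform_def by (simp add: algebra_simps power2_eq_square)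
  then have "W$1$1 * det W \<ge> 0" using real_posdef_qform_nonneg[OF assms] by simp
  ultimately show ?thesis by (simp add: zero_le_mult_iff)
qed

lemma rank_one_update_posdef:
  fixes k u v :: real
  assumes "k \<ge> 0"
  obtains W where "real_posdef W" and "det W = 1 + k * (u^2 + v^2)"
    and "qform W u v = (u^2 + v^2) * (1 + k * (u^2 + v^2))"
proof -
  define W :: "real^2^2" where "W = (\<chi> i j. if i = 1 then (if j = 1 then 1 + k * u^2 else k * u * v)
                                          else (if j = 1 then k * u * v else 1 + k * v^2))"
  have form: "x \<bullet> (W *v x) = (x$1)^2 + (x$2)^2 + k * (u * x$1 + v * x$2)^2" for x :: "real^2"
    by (simp add: W_def inner_vec_def sum_2 matrix_vector_mult_def algebra_simps power2_eq_square)
  have "real_posdef W" unfolding real_posdef_def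
  proof (intro conjI allI impI)
    show "transpose W = W" by (simp add: W_def transpose_def vec_eq_iff forall_2)
    fix x :: "real^2" assume "x \<noteq> 0"
    then have "(x$1)^2 + (x$2)^2 > 0" by (auto simp: vec_eq_iff forall_2 add_pos_nonneg add_nonneg_pos)
    moreover have "k * (u * x$1 + v * x$2)^2 \<ge> 0" using assms by simp
    ultimately show "x \<bullet> (W *v x) > 0" unfolding form by linarith
  qed
  moreover have "det W = 1 + k * (u^2 + v^2)" "qform W u v = (u^2 + v^2) * (1 + k * (u^2 + v^2))"
    by (simp_all add: W_def det_2 qform_def algebra_simps power2_eq_square)
  ultimately show ?thesis using that by blast
qed

lemma trace_mult_symmetric:
  fixes W R :: "real^2^2"
  assumes "W$1$2 = W$2$1" "R$1$2 = R$2$1"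
  shows "trace (W ** R) = W$1$1 * R$1$1 + 2 * W$1$2 * R$1$2 + W$2$2 * R$2$2"
  using assms by (simp add: trace_def matrix_matrix_mult_def sum_2)

lemma charpoly_2: "charpoly M = [: M$1$1 * M$2$2 - M$1$2 * M$2$1, - (M$1$1 + M$2$2), 1 :]"
  unfolding charpoly_def det_2 by (simp add: algebra_simps)

lemma TrAbs_traceless:
  assumes "M$1$1 + M$2$2 = 0" and "det M \<ge> 0"
  shows "TrAbs M = 2 * sqrt (det M)"
proof -
  define r where "r = \<i> * complex_of_real (sqrt (det M))"
  have "charpoly M = [: - (r * r), 0, 1 :]"
    using assms by (simp add: charpoly_2 det_2 r_def algebra_simps flip: of_real_mult)
  also have "\<dots> = [: -r, 1 :] * [: r, 1 :]" by simp
  finally have cp: "charpoly M = [: -r, 1 :] * [: r, 1 :]" .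
  have "proots (charpoly M) = {# r, -r #}" unfolding cp by (subst proots_mult) auto
  then show ?thesis using assms(2) by (simp add: TrAbs_def r_def norm_mult)
qed

text \<open>The imaginary parts of both bounds are multiples of the generator of rotations.\<close>
lemma TrAbs_mult_rotation_generator:
  fixes W M :: "real^2^2"
  assumes "W$1$2 = W$2$1" "det W \<ge> 0"
    and "M$1$1 = 0" "M$2$2 = 0" "M$1$2 = - a" "M$2$1 = a"
  shows "TrAbs (W ** M) = 2 * \<bar>a\<bar> * sqrt (det W)"
proof -
  have "det M = a^2" using assms by (simp add: det_2 power2_eq_square)
  then have det: "det (W ** M) = a^2 * det W" by (simp add: det_mul)
  have "(W ** M)$1$1 + (W ** M)$2$2 = 0"
    using assms by (simp add: matrix_matrix_mult_def sum_2)
  then have "TrAbs (W ** M) = 2 * sqrt (a^2 * det W)"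
    using TrAbs_traceless[of "W ** M"] assms(2) det by simp
  then show ?thesis by (simp add: real_sqrt_mult)
qed

lemma matrix_inv_unique:
  fixes A B :: "'a::semiring_1^'n^'n"
  assumes "A ** B = mat 1" "B ** A = mat 1"
  shows "matrix_inv A = B"
proof -
  have inv: "A ** matrix_inv A = mat 1 \<and> matrix_inv A ** A = mat 1"
    unfolding matrix_inv_def by (rule someI[of _ B]) (use assms in auto)
  have "matrix_inv A = matrix_inv A ** (A ** B)" by (simp add: assms)
  also have "\<dots> = B" using inv by (simp add: matrix_mul_assoc)
  finally show ?thesis .
qed

lemma matrix_inv_2:
  fixes A :: "'a::field^2^2"
  assumes "det A \<noteq> 0"
  shows "matrix_inv A = (\<chi> i j. (if i = 1 then (if j = 1 then A$2$2 else - A$1$2)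
                                 else (if j = 1 then - A$2$1 else A$1$1)) / det A)"
  using assms
  by (intro matrix_inv_unique;
      simp add: vec_eq_iff forall_2 matrix_matrix_mult_def sum_2 mat_def field_simps;
      simp add: det_2 algebra_simps)

section \<open>Vector identities in $\mathbb{R}^3$\<close>

lemma cross_gram_decomposition:
  "((a \<times> b) \<bullet> (a \<times> b)) *\<^sub>R y = (y \<bullet> (a \<times> b)) *\<^sub>R (a \<times> b)
     + ((y \<bullet> a) * (b \<bullet> b) - (y \<bullet> b) * (a \<bullet> b)) *\<^sub>R a + ((y \<bullet> b) * (a \<bullet> a) - (y \<bullet> a) * (a \<bullet> b)) *\<^sub>R b"
  by (simp add: cross3_simps forall_3)

lemma cross_gram_triple:
  "((a \<times> b) \<bullet> (a \<times> b)) * (s \<bullet> (x \<times> y)) =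
     (s \<bullet> (a \<times> b)) * ((x \<bullet> a) * (y \<bullet> b) - (x \<bullet> b) * (y \<bullet> a))
     - (x \<bullet> (a \<times> b)) * ((s \<bullet> a) * (y \<bullet> b) - (s \<bullet> b) * (y \<bullet> a))
     + (y \<bullet> (a \<times> b)) * ((s \<bullet> a) * (x \<bullet> b) - (s \<bullet> b) * (x \<bullet> a))"
  by (simp add: cross3_simps)

lemma cross_nonzero_if_independent:
  fixes x y :: "real^3"
  assumes "\<And>a b. a *\<^sub>R x + b *\<^sub>R y = 0 \<Longrightarrow> a = 0 \<and> b = 0"
  shows "x \<times> y \<noteq> 0"
proof
  assume "x \<times> y = 0"
  then consider "x = 0" | "y = 0" | c where "y = c *\<^sub>R x"
    unfolding cross_eq_0 collinear_lemma by blast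
  then show False
  proof cases
    case 1
    then show False using assms[of 1 0] by simp
  next
    case 2
    then show False using assms[of 0 1] by simp
  next
    case 3
    then show False using assms[of c "-1"] by simp
  qed
qed

lemma homogeneous_system_2_trivial:
  fixes a b c p q :: real
  assumes "a * q - p * b = 0" and "b * q - p * c = 0" and "a * c - b^2 \<noteq> 0"
  shows "p = 0" and "q = 0"
proof -
  have "(a * c - b^2) * p = b * (a * q - p * b) - a * (b * q - p * c)"
    by (simp add: algebra_simps power2_eq_square)
  then show "p = 0" using assms by simp
  have "(a * c - b^2) * q = c * (a * q - p * b) - b * (b * q - p * c)"
    by (simp add: algebra_simps power2_eq_square)
  then show "q = 0" using assms by simp
qed

lemma completing_square_identity:
  fixes N c M g11 g12 g22 p1 p2 t1 t2 w11 w12 w22 X11 X12 X22 S1 S2 :: real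
  assumes N: "N = g11 * g22 - g12^2" and M: "M = c^2 + p1^2 * g22 - 2 * p1 * p2 * g12 + p2^2 * g11"
    and X: "N * X11 = t1 * t1 + g22" "N * X12 = t1 * t2 - g12" "N * X22 = t2 * t2 + g11"
    and S: "N * S1 = c * t1 + (p1 * g22 - p2 * g12)" "N * S2 = c * t2 + (p2 * g11 - p1 * g12)"
  defines "y1 \<equiv> (N - c^2) * t1 - c * (p1 * g22 - p2 * g12)"
    and "y2 \<equiv> (N - c^2) * t2 - c * (p2 * g11 - p1 * g12)"
  shows "(N - c^2) * N^2 * (w11 * (X11 - S1 * S1) + 2 * w12 * (X12 - S1 * S2) + w22 * (X22 - S2 * S2))
    = (w11 * y1^2 + 2 * w12 * y1 * y2 + w22 * y2^2)
      + N * ((N - M) * (w11 * g22 - 2 * w12 * g12 + w22 * g11)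
             + N * (w11 * p2^2 + 2 * w12 * p2 * (- p1) + w22 * (- p1)^2))"
proof -
  have "(N - c^2) * N^2 * (w11 * (X11 - S1 * S1) + 2 * w12 * (X12 - S1 * S2) + w22 * (X22 - S2 * S2))
      = (N - c^2) * (w11 * (N * (N * X11) - (N * S1) * (N * S1))
          + 2 * w12 * (N * (N * X12) - (N * S1) * (N * S2)) + w22 * (N * (N * X22) - (N * S2) * (N * S2)))"
    by (simp add: algebra_simps power2_eq_square)
  also have "\<dots> = (N - c^2) * (w11 * (N * (t1 * t1 + g22) - (c * t1 + (p1 * g22 - p2 * g12))^2)
      + 2 * w12 * (N * (t1 * t2 - g12) - (c * t1 + (p1 * g22 - p2 * g12)) * (c * t2 + (p2 * g11 - p1 * g12)))
      + w22 * (N * (t2 * t2 + g11) - (c * t2 + (p2 * g11 - p1 * g12))^2))"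
    unfolding X S power2_eq_square ..
  finally show ?thesis
    unfolding y1_def y2_def N M by (simp add: algebra_simps power2_eq_square)
qed

section \<open>The model at a point in Bloch coordinates\<close>

locale qubit_model_at =
  fixes \<rho> :: "real^2 \<Rightarrow> qop" and \<theta> :: "real^2" and s :: "real^3" and d :: "2 \<Rightarrow> real^3"
  assumes state_bloch: "\<rho> \<theta> = bloch (1/2) ((1/2) *\<^sub>R s)"
    and bloch_vector_inside: "s \<bullet> s < 1"
    and pd_bloch: "\<And>i. pd \<rho> \<theta> i = bloch 0 ((1/2) *\<^sub>R d i)"
    and tangent_cross_nonzero: "d 1 \<times> d 2 \<noteq> 0"
begin

abbreviation nrm :: "real^3" where "nrm \<equiv> d 1 \<times> d 2"

definition nrm2 :: real where "nrm2 = nrm \<bullet> nrm"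

definition snrm :: real where "snrm = s \<bullet> nrm"

lemma nrm2_pos: "nrm2 > 0"
  using tangent_cross_nonzero by (simp add: nrm2_def)

lemma nrm2_eq_gram_det: "nrm2 = (d 1 \<bullet> d 1) * (d 2 \<bullet> d 2) - (d 1 \<bullet> d 2)^2"
  by (simp add: nrm2_def dot_cross inner_commute power2_eq_square)

lemma snrm_sq_less: "snrm^2 < nrm2"
proof -
  have "snrm^2 \<le> (s \<bullet> s) * nrm2"
    unfolding snrm_def nrm2_def power2_eq_square by (metis Cauchy_Schwarz_ineq power2_eq_square)
  also have "\<dots> < nrm2" using bloch_vector_inside nrm2_pos by simp
  finally show ?thesis .
qed

lemma one_minus_ss_pos: "1 - s \<bullet> s > 0"
  using bloch_vector_inside by simp

definition sld_vec :: "2 \<Rightarrow> real^3" where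
  "sld_vec i = d i + ((s \<bullet> d i) / (1 - s \<bullet> s)) *\<^sub>R s"

lemma inner_sld_vec: "s \<bullet> sld_vec i = (s \<bullet> d i) / (1 - s \<bullet> s)"
proof -
  have "s \<bullet> sld_vec i = s \<bullet> d i + (s \<bullet> d i / (1 - s \<bullet> s)) * (s \<bullet> s)"
    unfolding sld_vec_def inner_add_right inner_scaleR_right by simp
  also have "\<dots> = (s \<bullet> d i) / (1 - s \<bullet> s)"
    using one_minus_ss_pos by (simp add: field_simps)
  finally show ?thesis .
qed

lemma sld_vec_minus: "sld_vec i - (s \<bullet> sld_vec i) *\<^sub>R s = d i"
  unfolding inner_sld_vec by (simp add: sld_vec_def)

lemma cross_sld_vec: "sld_vec i \<times> s = d i \<times> s"
  by (simp add: sld_vec_def cross_add_left cross_mult_left)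

lemma symmetrized_product_bloch:
  "(1/2::real) *\<^sub>R (\<rho> \<theta> ** bloch a x + bloch a x ** \<rho> \<theta>) = bloch ((a + s \<bullet> x)/2) ((1/2) *\<^sub>R (x + a *\<^sub>R s))"
  unfolding state_bloch bloch_anticommutator scaleR_bloch by (simp add: algebra_simps)

lemma SLD_bloch: "SLD \<rho> \<theta> i = bloch (- (s \<bullet> sld_vec i)) (sld_vec i)"
  unfolding SLD_def
proof (rule the_equality)
  show "herm (bloch (- (s \<bullet> sld_vec i)) (sld_vec i)) \<and>
      pd \<rho> \<theta> i = (1/2::real) *\<^sub>R (\<rho> \<theta> ** bloch (- (s \<bullet> sld_vec i)) (sld_vec i)
                                    + bloch (- (s \<bullet> sld_vec i)) (sld_vec i) ** \<rho> \<theta>)"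
    unfolding symmetrized_product_bloch pd_bloch sld_vec_minus[symmetric, of i]
    by (simp add: herm_bloch algebra_simps)
next
  fix L assume L: "herm L \<and> pd \<rho> \<theta> i = (1/2::real) *\<^sub>R (\<rho> \<theta> ** L + L ** \<rho> \<theta>)"
  then obtain a x where Lx: "L = bloch a x" by (blast elim: herm_obtain_bloch)
  from L have "bloch 0 ((1/2) *\<^sub>R d i) = bloch ((a + s \<bullet> x)/2) ((1/2) *\<^sub>R (x + a *\<^sub>R s))"
    by (simp add: Lx symmetrized_product_bloch pd_bloch)
  then have a: "a = - (s \<bullet> x)" and dx: "d i = x + a *\<^sub>R s" by simp_all
  have "s \<bullet> d i = (s \<bullet> x) * (1 - s \<bullet> s)"
    unfolding dx inner_add_right inner_scaleR_right by (simp add: a algebra_simps)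
  then have sx: "s \<bullet> x = s \<bullet> sld_vec i"
    using one_minus_ss_pos by (simp add: inner_sld_vec field_simps)
  have "x = d i + (s \<bullet> sld_vec i) *\<^sub>R s" using dx a sx by simp
  then have "x = sld_vec i" using sld_vec_minus[of i] by (simp add: algebra_simps)
  then show "L = bloch (- (s \<bullet> sld_vec i)) (sld_vec i)" using Lx a sx by simp
qed

lemma SLD_in_tangent: "SLD \<rho> \<theta> i \<in> SLD_tangent \<rho> \<theta>"
proof -
  have "i = 1 \<or> i = 2" using exhaust_2 by blast
  then show ?thesis unfolding SLD_tangent_def by (auto intro: span_base)
qed

lemma sld_ip_bloch: "sld_ip (\<rho> \<theta>) (bloch b' y) (bloch b z) = b * b' + b' * (s \<bullet> z) + z \<bullet> y + b * (s \<bullet> y)"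
  unfolding sld_ip_def state_bloch by (simp add: trace_bloch_mult3 algebra_simps inner_commute)

lemma commutator_expectation_bloch:
  "trace (\<rho> \<theta> ** (bloch b y ** bloch a x - bloch a x ** bloch b y)) / (2 * \<i>) = complex_of_real (s \<bullet> (y \<times> x))"
  unfolding state_bloch trace_bloch_commutator by (simp add: complex_eq_iff)

lemma comm_op_bloch: "comm_op \<rho> \<theta> (bloch a x) = bloch 0 (x \<times> s)"
  unfolding comm_op_def
proof (rule the_equality)
  show "herm (bloch 0 (x \<times> s)) \<and> (\<forall>Y. herm Y \<longrightarrow> complex_of_real (sld_ip (\<rho> \<theta>) Y (bloch 0 (x \<times> s))) =
          trace (\<rho> \<theta> ** (Y ** bloch a x - bloch a x ** Y)) / (2 * \<i>))"
  proof (intro conjI allI impI herm_bloch)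
    fix Y assume "herm Y"
    then obtain b y where Y: "Y = bloch b y" by (blast elim: herm_obtain_bloch)
    have "s \<bullet> (x \<times> s) = 0" and "(x \<times> s) \<bullet> y = s \<bullet> (y \<times> x)"
      by (simp_all add: cross3_simps)
    then show "complex_of_real (sld_ip (\<rho> \<theta>) Y (bloch 0 (x \<times> s)))
        = trace (\<rho> \<theta> ** (Y ** bloch a x - bloch a x ** Y)) / (2 * \<i>)"
      unfolding Y sld_ip_bloch commutator_expectation_bloch by simp
  qed
next
  fix Z assume Z: "herm Z \<and> (\<forall>Y. herm Y \<longrightarrow> complex_of_real (sld_ip (\<rho> \<theta>) Y Z) =
      trace (\<rho> \<theta> ** (Y ** bloch a x - bloch a x ** Y)) / (2 * \<i>))"
  then obtain b z where Zb: "Z = bloch b z" by (blast elim: herm_obtain_bloch)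
  have eq: "b * b' + b' * (s \<bullet> z) + z \<bullet> y + b * (s \<bullet> y) = s \<bullet> (y \<times> x)" for b' y
  proof -
    have "complex_of_real (sld_ip (\<rho> \<theta>) (bloch b' y) Z)
        = trace (\<rho> \<theta> ** (bloch b' y ** bloch a x - bloch a x ** bloch b' y)) / (2 * \<i>)"
      using Z herm_bloch[of b' y] by blast
    then show ?thesis unfolding Zb sld_ip_bloch commutator_expectation_bloch of_real_eq_iff .
  qed
  from eq[of 1 0] have b: "b + s \<bullet> z = 0" by simp
  have "(z + b *\<^sub>R s - x \<times> s) \<bullet> y = 0" for y
    using eq[of 0 y] by (simp add: inner_diff_left inner_add_left cross3_simps)
  from this[of "z + b *\<^sub>R s - x \<times> s"] have "z + b *\<^sub>R s - x \<times> s = 0"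
    by (simp only: inner_eq_zero_iff)
  then have z: "z = x \<times> s - b *\<^sub>R s" by (simp add: algebra_simps)
  then have "s \<bullet> z = - b * (s \<bullet> s)" by (simp add: inner_diff_right dot_cross_self)
  with b have "b * (1 - s \<bullet> s) = 0" by (simp add: algebra_simps)
  then have "b = 0" using one_minus_ss_pos by simp
  then show "Z = bloch 0 (x \<times> s)" using Zb z by simp
qed

lemma D_invariant_imp_orthogonal:
  assumes "D_invariant \<rho> \<theta>"
  shows "s \<bullet> d 1 = 0" and "s \<bullet> d 2 = 0"
proof -
  have nrm_orth: "nrm \<bullet> (d i \<times> s) = 0" for i
  proof -
    have "comm_op \<rho> \<theta> (SLD \<rho> \<theta> i) \<in> SLD_tangent \<rho> \<theta>"
      using assms SLD_in_tangent[of i] unfolding D_invariant_def by blast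
    then obtain u v where "bloch 0 (sld_vec i \<times> s)
        = u *\<^sub>R bloch (- (s \<bullet> sld_vec 1)) (sld_vec 1) + v *\<^sub>R bloch (- (s \<bullet> sld_vec 2)) (sld_vec 2)"
      unfolding SLD_tangent_def SLD_bloch comm_op_bloch span_pair_iff by blast
    then have e1: "u * (s \<bullet> sld_vec 1) + v * (s \<bullet> sld_vec 2) = 0"
      and e2: "d i \<times> s = u *\<^sub>R sld_vec 1 + v *\<^sub>R sld_vec 2"
      by (simp_all add: scaleR_bloch bloch_add cross_sld_vec algebra_simps)
    have "u *\<^sub>R sld_vec 1 + v *\<^sub>R sld_vec 2
        = u *\<^sub>R d 1 + v *\<^sub>R d 2 + (u * (s \<bullet> sld_vec 1) + v * (s \<bullet> sld_vec 2)) *\<^sub>R s"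
      unfolding sld_vec_minus[symmetric, of 1] sld_vec_minus[symmetric, of 2] by (simp add: algebra_simps)
    with e1 e2 have "d i \<times> s = u *\<^sub>R d 1 + v *\<^sub>R d 2" by simp
    then show ?thesis by (simp add: inner_add_right cross3_simps)
  qed
  have "(d 1 \<bullet> d 1) * (s \<bullet> d 2) - (s \<bullet> d 1) * (d 1 \<bullet> d 2) = 0"
    and "(d 1 \<bullet> d 2) * (s \<bullet> d 2) - (s \<bullet> d 1) * (d 2 \<bullet> d 2) = 0"
    using nrm_orth[of 1] nrm_orth[of 2] by (simp_all add: dot_cross inner_commute)
  moreover have "(d 1 \<bullet> d 1) * (d 2 \<bullet> d 2) - (d 1 \<bullet> d 2)^2 \<noteq> 0"
    using nrm2_pos nrm2_eq_gram_det by simp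
  ultimately show "s \<bullet> d 1 = 0" "s \<bullet> d 2 = 0"
    using homogeneous_system_2_trivial by blast+
qed

lemma orthogonal_imp_D_invariant:
  assumes "s \<bullet> d 1 = 0" and "s \<bullet> d 2 = 0"
  shows "D_invariant \<rho> \<theta>"
proof -
  have "sld_vec i = d i" if "i = 1 \<or> i = 2" for i
    using that assms by (auto simp: sld_vec_def)
  then have T: "SLD_tangent \<rho> \<theta> = span {bloch 0 (d 1), bloch 0 (d 2)}"
    unfolding SLD_tangent_def SLD_bloch using assms by simp
  have "nrm2 *\<^sub>R s = snrm *\<^sub>R nrm"
    using cross_gram_decomposition[of "d 1" "d 2" s] assms
    unfolding nrm2_def snrm_def by (simp add: inner_commute)
  then have "s = (snrm *\<^sub>R nrm) /\<^sub>R nrm2" using nrm2_pos by (subst divideR_right) auto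
  then have s: "s = (snrm / nrm2) *\<^sub>R nrm" by (simp add: divide_inverse mult.commute)
  show ?thesis unfolding D_invariant_def T
  proof
    fix Y assume "Y \<in> comm_op \<rho> \<theta> ` span {bloch 0 (d 1), bloch 0 (d 2)}"
    then obtain X where "X \<in> span {bloch 0 (d 1), bloch 0 (d 2)}" and "Y = comm_op \<rho> \<theta> X"
      by blast
    then obtain u v where "Y = comm_op \<rho> \<theta> (u *\<^sub>R bloch 0 (d 1) + v *\<^sub>R bloch 0 (d 2))"
      unfolding span_pair_iff by blast
    \<comment> \<open>\<open>x \<times> (d\<^sub>1 \<times> d\<^sub>2) = (x\<cdot>d\<^sub>2) d\<^sub>1 - (x\<cdot>d\<^sub>1) d\<^sub>2\<close> stays in the plane of the \<open>d\<^sub>i\<close>\<close>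
    then have "Y = bloch 0 ((u *\<^sub>R d 1 + v *\<^sub>R d 2) \<times> ((snrm / nrm2) *\<^sub>R nrm))"
      by (simp add: scaleR_bloch bloch_add comm_op_bloch flip: s)
    also have "\<dots> = ((snrm / nrm2) * (u * (d 1 \<bullet> d 2) + v * (d 2 \<bullet> d 2))) *\<^sub>R bloch 0 (d 1)
        + (- (snrm / nrm2) * (u * (d 1 \<bullet> d 1) + v * (d 1 \<bullet> d 2))) *\<^sub>R bloch 0 (d 2)"
      by (simp add: cross_mult_right Lagrange scaleR_bloch bloch_add inner_add_left inner_commute
          algebra_simps)
    finally show "Y \<in> span {bloch 0 (d 1), bloch 0 (d 2)}"
      unfolding span_pair_iff by blast
  qed
qed

lemma D_invariant_iff_orthogonal: "D_invariant \<rho> \<theta> \<longleftrightarrow> s \<bullet> d 1 = 0 \<and> s \<bullet> d 2 = 0"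
  using D_invariant_imp_orthogonal orthogonal_imp_D_invariant by blast

definition state_inv :: qop where
  "state_inv = bloch (2 / (1 - s \<bullet> s)) ((-2 / (1 - s \<bullet> s)) *\<^sub>R s)"

lemma state_inv_inverse: "\<rho> \<theta> ** state_inv = mat 1" "state_inv ** \<rho> \<theta> = mat 1"
  unfolding state_bloch state_inv_def using bloch_state_inverse bloch_vector_inside by auto

lemma RLD_eq: "RLD \<rho> \<theta> i = state_inv ** pd \<rho> \<theta> i"
  unfolding RLD_def
proof (rule the_equality)
  show "pd \<rho> \<theta> i = \<rho> \<theta> ** (state_inv ** pd \<rho> \<theta> i)"
    by (simp add: matrix_mul_assoc state_inv_inverse)
next
  fix L assume "pd \<rho> \<theta> i = \<rho> \<theta> ** L"
  then have "state_inv ** pd \<rho> \<theta> i = (state_inv ** \<rho> \<theta>) ** L" by (simp add: matrix_mul_assoc)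
  then show "L = state_inv ** pd \<rho> \<theta> i" by (simp add: state_inv_inverse)
qed

lemma RLD_fisher_nth:
  "RLD_fisher \<rho> \<theta> $ i $ j
     = Complex ((d i \<bullet> d j) / (1 - s \<bullet> s)) (- (d j \<bullet> (d i \<times> s)) / (1 - s \<bullet> s))"
proof -
  have "RLD_fisher \<rho> \<theta> $ i $ j = trace (\<rho> \<theta> ** (state_inv ** pd \<rho> \<theta> j) ** (pd \<rho> \<theta> i ** state_inv))"
    by (simp add: RLD_fisher_def RLD_eq cadj_mult state_inv_def pd_bloch)
  also have "\<dots> = trace (pd \<rho> \<theta> j ** pd \<rho> \<theta> i ** state_inv)"
    by (simp add: matrix_mul_assoc state_inv_inverse flip: matrix_mul_assoc[of "\<rho> \<theta>"])
  also have "\<dots> = Complex ((d i \<bullet> d j) / (1 - s \<bullet> s)) (- (d j \<bullet> (d i \<times> s)) / (1 - s \<bullet> s))"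
    using one_minus_ss_pos
    by (simp add: pd_bloch state_inv_def trace_bloch_mult3 complex_eq_iff cross_mult_left
        cross_mult_right inner_commute; simp add: field_simps)
  finally show ?thesis .
qed

text \<open>\<open>adj_gram_weight W = tr (W adj G)\<close> for the Gram matrix \<open>G\<close> of \<open>d\<^sub>1, d\<^sub>2\<close>.\<close>
definition adj_gram_weight :: "real^2^2 \<Rightarrow> real" where
  "adj_gram_weight W = W$1$1 * (d 2 \<bullet> d 2) - 2 * W$1$2 * (d 1 \<bullet> d 2) + W$2$2 * (d 1 \<bullet> d 1)"

lemma RLD_bound_bloch:
  assumes "W$1$2 = W$2$1" and "det W \<ge> 0"
  shows "RLD_bound \<rho> \<theta> W
    = (1 - s \<bullet> s) / (nrm2 - snrm^2) * (adj_gram_weight W + 2 * \<bar>snrm\<bar> * sqrt (det W))"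
proof -
  define k where "k = 1 - s \<bullet> s"
  define D where "D = nrm2 - snrm^2"
  have k: "k > 0" using one_minus_ss_pos by (simp add: k_def)
  have D: "D > 0" using snrm_sq_less by (simp add: D_def)
  let ?F = "RLD_fisher \<rho> \<theta>"
  have "d 1 \<bullet> (d 1 \<times> s) = 0" "d 2 \<bullet> (d 2 \<times> s) = 0" "d 2 \<bullet> (d 1 \<times> s) = - snrm" "d 1 \<bullet> (d 2 \<times> s) = snrm"
    by (simp_all add: snrm_def cross3_simps)
  then have F: "?F$1$1 = complex_of_real ((d 1 \<bullet> d 1) / k)" "?F$2$2 = complex_of_real ((d 2 \<bullet> d 2) / k)"
    "?F$1$2 = Complex ((d 1 \<bullet> d 2) / k) (snrm / k)" "?F$2$1 = Complex ((d 1 \<bullet> d 2) / k) (- snrm / k)"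
    by (simp_all add: RLD_fisher_nth k_def complex_eq_iff inner_commute)
  have "det ?F = complex_of_real (D / k^2)"
    using k unfolding det_2 F D_def nrm2_eq_gram_det
    by (simp add: complex_eq_iff field_simps power2_eq_square)
  then have inv: "matrix_inv ?F = (\<chi> i j. (if i = 1 then (if j = 1 then ?F$2$2 else - ?F$1$2)
      else (if j = 1 then - ?F$2$1 else ?F$1$1)) / complex_of_real (D / k^2))"
    using matrix_inv_2[of ?F] k D by simp
  let ?R = "ReM (matrix_inv ?F)" and ?I = "ImM (matrix_inv ?F)"
  have R: "?R$1$1 = k / D * (d 2 \<bullet> d 2)" "?R$2$2 = k / D * (d 1 \<bullet> d 1)"
      "?R$1$2 = - (k / D * (d 1 \<bullet> d 2))" "?R$2$1 = - (k / D * (d 1 \<bullet> d 2))"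
    and I: "?I$1$1 = 0" "?I$2$2 = 0" "?I$1$2 = - (k / D * snrm)" "?I$2$1 = k / D * snrm"
    using k by (simp_all add: ReM_def ImM_def inv F field_simps power2_eq_square)
  have "trace (W ** ?R) = k / D * adj_gram_weight W"
    using assms(1) R by (simp add: trace_mult_symmetric adj_gram_weight_def algebra_simps)
  moreover have "TrAbs (W ** ?I) = 2 * \<bar>k / D * snrm\<bar> * sqrt (det W)"
    by (rule TrAbs_mult_rotation_generator[OF assms I])
  ultimately show ?thesis
    using k D by (simp add: RLD_bound_def k_def[symmetric] D_def[symmetric] abs_mult algebra_simps)
qed

definition dual :: "(2 \<Rightarrow> real^3) \<Rightarrow> bool" where
  "dual x \<longleftrightarrow> (\<forall>i j. d i \<bullet> x j = (if i = j then 1 else 0))"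

definition bloch_observables :: "(2 \<Rightarrow> real^3) \<Rightarrow> 2 \<Rightarrow> qop" where
  "bloch_observables x j = bloch (- (s \<bullet> x j)) (x j)"

lemma loc_unbiased_iff_dual: "loc_unbiased \<rho> \<theta> X \<longleftrightarrow> (\<exists>x. dual x \<and> X = bloch_observables x)"
proof
  assume LU: "loc_unbiased \<rho> \<theta> X"
  have "\<forall>j. \<exists>a y. X j = bloch a y"
    using LU unfolding loc_unbiased_def by (metis herm_obtain_bloch)
  then obtain a y where X: "\<And>j. X j = bloch (a j) (y j)" by metis
  have "trace (\<rho> \<theta> ** X j) = 0" for j using LU unfolding loc_unbiased_def by blast
  then have "a j = - (s \<bullet> y j)" for j
    unfolding X state_bloch trace_bloch_mult of_real_eq_0_iff by (simp add: eq_neg_iff_add_eq_0)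
  then have "X = bloch_observables y" by (simp add: X bloch_observables_def fun_eq_iff)
  moreover have "d i \<bullet> y j = (if i = j then 1 else 0)" for i j
  proof -
    have "trace (pd \<rho> \<theta> i ** X j) = (if i = j then 1 else 0)" using LU unfolding loc_unbiased_def by blast
    then show ?thesis unfolding X pd_bloch trace_bloch_mult by (cases "i = j") auto
  qed
  ultimately show "\<exists>x. dual x \<and> X = bloch_observables x" unfolding dual_def by blast
next
  assume "\<exists>x. dual x \<and> X = bloch_observables x"
  then obtain x where "dual x" and "X = bloch_observables x" by blast
  then show "loc_unbiased \<rho> \<theta> X"
    by (simp add: loc_unbiased_def dual_def bloch_observables_def state_bloch pd_bloch
        trace_bloch_mult herm_bloch)
qed

definition real_cov :: "(2 \<Rightarrow> real^3) \<Rightarrow> 2 \<Rightarrow> 2 \<Rightarrow> real" where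
  "real_cov x i j = x i \<bullet> x j - (s \<bullet> x i) * (s \<bullet> x j)"

definition weighted_cov :: "real^2^2 \<Rightarrow> (2 \<Rightarrow> real^3) \<Rightarrow> real" where
  "weighted_cov W x = W$1$1 * real_cov x 1 1 + 2 * W$1$2 * real_cov x 1 2 + W$2$2 * real_cov x 2 2"

definition holevo_fn :: "real^2^2 \<Rightarrow> (2 \<Rightarrow> real^3) \<Rightarrow> real" where
  "holevo_fn W x = weighted_cov W x + 2 * \<bar>s \<bullet> (x 1 \<times> x 2)\<bar> * sqrt (det W)"

lemma Zmat_bloch_observables:
  "Zmat \<rho> \<theta> (bloch_observables x) $ i $ j = Complex (real_cov x i j) (s \<bullet> (x j \<times> x i))"
  unfolding Zmat_def state_bloch real_cov_def bloch_observables_def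
  by (simp add: trace_bloch_mult3 complex_eq_iff algebra_simps inner_commute)

lemma Holevo_objective_bloch:
  assumes "W$1$2 = W$2$1" and "det W \<ge> 0"
  shows "trace (W ** ReM (Zmat \<rho> \<theta> (bloch_observables x)))
      + TrAbs (W ** ImM (Zmat \<rho> \<theta> (bloch_observables x))) = holevo_fn W x"
proof -
  let ?Z = "Zmat \<rho> \<theta> (bloch_observables x)"
  have R: "ReM ?Z $ i $ j = real_cov x i j" for i j by (simp add: ReM_def Zmat_bloch_observables)
  have I: "ImM ?Z $ i $ j = s \<bullet> (x j \<times> x i)" for i j by (simp add: ImM_def Zmat_bloch_observables)
  have "trace (W ** ReM ?Z) = weighted_cov W x"
    using assms(1) by (simp add: trace_mult_symmetric R weighted_cov_def real_cov_def inner_commute)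
  moreover have "TrAbs (W ** ImM ?Z) = 2 * \<bar>s \<bullet> (x 1 \<times> x 2)\<bar> * sqrt (det W)"
    by (rule TrAbs_mult_rotation_generator[OF assms]) (simp_all add: I cross_skew[of "x 2"])
  ultimately show ?thesis by (simp add: holevo_fn_def)
qed

lemma Holevo_bound_bloch:
  assumes "real_posdef W"
  shows "Holevo_bound \<rho> \<theta> W = Inf (holevo_fn W ` Collect dual)"
proof -
  note obj = Holevo_objective_bloch[OF real_posdef_sym[OF assms] real_posdef_det_nonneg[OF assms]]
  have "{trace (W ** ReM (Zmat \<rho> \<theta> X)) + TrAbs (W ** ImM (Zmat \<rho> \<theta> X)) | X. loc_unbiased \<rho> \<theta> X}
      = (\<lambda>x. trace (W ** ReM (Zmat \<rho> \<theta> (bloch_observables x)))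
              + TrAbs (W ** ImM (Zmat \<rho> \<theta> (bloch_observables x)))) ` Collect dual"
    unfolding loc_unbiased_iff_dual by blast
  then show ?thesis by (simp add: Holevo_bound_def obj)
qed

lemma gram_expansion:
  "nrm2 * (y \<bullet> z) = (y \<bullet> nrm) * (z \<bullet> nrm)
     + ((y \<bullet> d 1) * (d 2 \<bullet> d 2) - (y \<bullet> d 2) * (d 1 \<bullet> d 2)) * (z \<bullet> d 1)
     + ((y \<bullet> d 2) * (d 1 \<bullet> d 1) - (y \<bullet> d 1) * (d 1 \<bullet> d 2)) * (z \<bullet> d 2)"
proof -
  have "nrm2 * (y \<bullet> z) = (nrm2 *\<^sub>R y) \<bullet> z" by simp
  then show ?thesis
    unfolding nrm2_def cross_gram_decomposition by (simp add: inner_add_left algebra_simps inner_commute)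
qed

lemma dual_identities:
  assumes "dual x"
  shows "nrm2 * (x 1 \<bullet> x 1) = (x 1 \<bullet> nrm) * (x 1 \<bullet> nrm) + d 2 \<bullet> d 2"
    and "nrm2 * (x 1 \<bullet> x 2) = (x 1 \<bullet> nrm) * (x 2 \<bullet> nrm) - d 1 \<bullet> d 2"
    and "nrm2 * (x 2 \<bullet> x 2) = (x 2 \<bullet> nrm) * (x 2 \<bullet> nrm) + d 1 \<bullet> d 1"
    and "nrm2 * (s \<bullet> x 1) = snrm * (x 1 \<bullet> nrm) + ((s \<bullet> d 1) * (d 2 \<bullet> d 2) - (s \<bullet> d 2) * (d 1 \<bullet> d 2))"
    and "nrm2 * (s \<bullet> x 2) = snrm * (x 2 \<bullet> nrm) + ((s \<bullet> d 2) * (d 1 \<bullet> d 1) - (s \<bullet> d 1) * (d 1 \<bullet> d 2))"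
    and "nrm2 * (s \<bullet> s) = snrm^2 + (s \<bullet> d 1)^2 * (d 2 \<bullet> d 2)
           - 2 * (s \<bullet> d 1) * (s \<bullet> d 2) * (d 1 \<bullet> d 2) + (s \<bullet> d 2)^2 * (d 1 \<bullet> d 1)"
    and "nrm2 * (s \<bullet> (x 1 \<times> x 2)) = snrm - (s \<bullet> d 1) * (x 1 \<bullet> nrm) - (s \<bullet> d 2) * (x 2 \<bullet> nrm)"
proof -
  have "d i \<bullet> x j = (if i = j then 1 else 0)" for i j using assms by (simp add: dual_def)
  from this[of 1 1] this[of 2 1] this[of 1 2] this[of 2 2]
  have c: "x 1 \<bullet> d 1 = 1" "x 1 \<bullet> d 2 = 0" "x 2 \<bullet> d 1 = 0" "x 2 \<bullet> d 2 = 1"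
    by (simp_all add: inner_commute)
  show "nrm2 * (x 1 \<bullet> x 1) = (x 1 \<bullet> nrm) * (x 1 \<bullet> nrm) + d 2 \<bullet> d 2"
    "nrm2 * (x 1 \<bullet> x 2) = (x 1 \<bullet> nrm) * (x 2 \<bullet> nrm) - d 1 \<bullet> d 2"
    "nrm2 * (x 2 \<bullet> x 2) = (x 2 \<bullet> nrm) * (x 2 \<bullet> nrm) + d 1 \<bullet> d 1"
    by (simp_all add: gram_expansion c)
  show "nrm2 * (s \<bullet> x 1) = snrm * (x 1 \<bullet> nrm) + ((s \<bullet> d 1) * (d 2 \<bullet> d 2) - (s \<bullet> d 2) * (d 1 \<bullet> d 2))"
    "nrm2 * (s \<bullet> x 2) = snrm * (x 2 \<bullet> nrm) + ((s \<bullet> d 2) * (d 1 \<bullet> d 1) - (s \<bullet> d 1) * (d 1 \<bullet> d 2))"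
    by (simp_all add: gram_expansion c snrm_def[symmetric])
  show "nrm2 * (s \<bullet> s) = snrm^2 + (s \<bullet> d 1)^2 * (d 2 \<bullet> d 2)
      - 2 * (s \<bullet> d 1) * (s \<bullet> d 2) * (d 1 \<bullet> d 2) + (s \<bullet> d 2)^2 * (d 1 \<bullet> d 1)"
    by (simp add: gram_expansion snrm_def algebra_simps power2_eq_square)
  show "nrm2 * (s \<bullet> (x 1 \<times> x 2)) = snrm - (s \<bullet> d 1) * (x 1 \<bullet> nrm) - (s \<bullet> d 2) * (x 2 \<bullet> nrm)"
    unfolding nrm2_def cross_gram_triple using c by (simp add: snrm_def algebra_simps)
qed

definition s_weight :: "real^2^2 \<Rightarrow> real" where
  "s_weight W = qform W (s \<bullet> d 2) (- (s \<bullet> d 1))"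

lemma weighted_cov_decomposition:
  assumes "dual x"
  defines "y1 \<equiv> (nrm2 - snrm^2) * (x 1 \<bullet> nrm) - snrm * ((s \<bullet> d 1) * (d 2 \<bullet> d 2) - (s \<bullet> d 2) * (d 1 \<bullet> d 2))"
    and "y2 \<equiv> (nrm2 - snrm^2) * (x 2 \<bullet> nrm) - snrm * ((s \<bullet> d 2) * (d 1 \<bullet> d 1) - (s \<bullet> d 1) * (d 1 \<bullet> d 2))"
  shows "(nrm2 - snrm^2) * nrm2^2 * weighted_cov W x
    = qform W y1 y2 + nrm2^2 * ((1 - s \<bullet> s) * adj_gram_weight W + s_weight W)"
proof -
  note r = dual_identities[OF assms(1)]
  have "(nrm2 - snrm^2) * nrm2^2 * weighted_cov W x
      = qform W y1 y2 + nrm2 * ((nrm2 - nrm2 * (s \<bullet> s)) * adj_gram_weight W + nrm2 * s_weight W)"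
    unfolding weighted_cov_def real_cov_def qform_def adj_gram_weight_def s_weight_def y1_def y2_def
    by (rule completing_square_identity[OF nrm2_eq_gram_det r(6) r(1-5)])
  then show ?thesis by (simp add: algebra_simps power2_eq_square)
qed

lemma weighted_cov_lower_bound:
  assumes "real_posdef W" and "dual x"
  shows "((1 - s \<bullet> s) * adj_gram_weight W + s_weight W) / (nrm2 - snrm^2) \<le> weighted_cov W x"
proof -
  have D: "nrm2 - snrm^2 > 0" using snrm_sq_less by simp
  have "nrm2^2 * ((1 - s \<bullet> s) * adj_gram_weight W + s_weight W) \<le> (nrm2 - snrm^2) * nrm2^2 * weighted_cov W x"
    unfolding weighted_cov_decomposition[OF assms(2)] using real_posdef_qform_nonneg[OF assms(1)] by simp
  then have "(1 - s \<bullet> s) * adj_gram_weight W + s_weight W \<le> (nrm2 - snrm^2) * weighted_cov W x"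
    using nrm2_pos by (simp add: mult.commute mult.left_commute)
  then show ?thesis using D by (simp add: divide_le_eq mult.commute)
qed

definition recip :: "2 \<Rightarrow> real^3" where
  "recip j = (1 / nrm2) *\<^sub>R (if j = 1 then d 2 \<times> nrm else nrm \<times> d 1)"

lemma dual_recip: "dual recip"
proof -
  have "d 1 \<bullet> (d 2 \<times> nrm) = nrm2" "d 2 \<bullet> (nrm \<times> d 1) = nrm2"
    "d 2 \<bullet> (d 2 \<times> nrm) = 0" "d 1 \<bullet> (nrm \<times> d 1) = 0"
    by (simp_all add: nrm2_def cross3_simps)
  then show ?thesis using nrm2_pos by (simp add: dual_def forall_2 recip_def)
qed

lemma recip_orthogonal_nrm: "recip j \<bullet> nrm = 0"
  by (simp add: recip_def dot_cross_self)

lemma Holevo_eq_RLD_if_orthogonal: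
  assumes p: "s \<bullet> d 1 = 0" "s \<bullet> d 2 = 0" and W: "real_posdef W"
  shows "Holevo_bound \<rho> \<theta> W = RLD_bound \<rho> \<theta> W"
proof -
  have "nrm2 * (s \<bullet> s) = snrm^2" using dual_identities(6)[OF dual_recip] p by simp
  then have coef: "(1 - s \<bullet> s) / (nrm2 - snrm^2) = 1 / nrm2"
    using nrm2_pos snrm_sq_less by (simp add: field_simps)
  then have coef': "(1 - s \<bullet> s) * t / (nrm2 - snrm^2) = t / nrm2" for t
    by (metis times_divide_eq_left mult.commute mult_1)
  have sw: "s_weight W = 0" by (simp add: s_weight_def qform_def p)
  have R: "RLD_bound \<rho> \<theta> W = (adj_gram_weight W + 2 * \<bar>snrm\<bar> * sqrt (det W)) / nrm2"
    using RLD_bound_bloch[OF real_posdef_sym[OF W] real_posdef_det_nonneg[OF W]] coef by simp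
  \<comment> \<open>with \<open>s \<bottom> d\<^sub>i\<close> the imaginary part is the same for every dual pair\<close>
  have fn: "holevo_fn W x = weighted_cov W x + 2 * \<bar>snrm\<bar> / nrm2 * sqrt (det W)" if "dual x" for x
  proof -
    have "s \<bullet> (x 1 \<times> x 2) = snrm / nrm2"
      using dual_identities(7)[OF that] p nrm2_pos by (simp add: field_simps)
    then show ?thesis using nrm2_pos by (simp add: holevo_fn_def)
  qed
  have lower: "adj_gram_weight W / nrm2 \<le> weighted_cov W x" if "dual x" for x
    using weighted_cov_lower_bound[OF W that] by (simp add: sw coef')
  have "(nrm2 - snrm^2) * nrm2^2 * weighted_cov W recip = nrm2^2 * ((1 - s \<bullet> s) * adj_gram_weight W)"
    using weighted_cov_decomposition[OF dual_recip, of W] by (simp add: recip_orthogonal_nrm p sw qform_def)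
  then have "(nrm2 - snrm^2) * weighted_cov W recip = (1 - s \<bullet> s) * adj_gram_weight W"
    using nrm2_pos by (simp add: mult.commute mult.left_commute)
  then have "weighted_cov W recip = adj_gram_weight W / nrm2"
    using snrm_sq_less by (simp add: eq_divide_eq mult.commute flip: coef')
  then have attained: "RLD_bound \<rho> \<theta> W = holevo_fn W recip"
    using fn[OF dual_recip] R nrm2_pos by (simp add: add_divide_distrib)
  have below: "RLD_bound \<rho> \<theta> W \<le> holevo_fn W x" if "dual x" for x
    using fn[OF that] lower[OF that] R nrm2_pos by (simp add: add_divide_distrib)
  show ?thesis unfolding Holevo_bound_bloch[OF W]
  proof (rule cInf_eq_minimum)
    show "RLD_bound \<rho> \<theta> W \<in> holevo_fn W ` Collect dual"
      using attained dual_recip by blast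
  qed (use below in blast)
qed

lemma Holevo_gt_RLD_if_not_orthogonal:
  assumes "s \<bullet> d 1 \<noteq> 0 \<or> s \<bullet> d 2 \<noteq> 0"
  shows "\<exists>W. real_posdef W \<and> RLD_bound \<rho> \<theta> W < Holevo_bound \<rho> \<theta> W"
proof -
  define P where "P = (s \<bullet> d 1)^2 + (s \<bullet> d 2)^2"
  have P: "P > 0" using assms by (auto simp: P_def add_pos_nonneg add_nonneg_pos)
  \<comment> \<open>stretch \<open>W\<close> along \<open>(s\<cdot>d\<^sub>2, -s\<cdot>d\<^sub>1)\<close> until \<open>P \<surd>det W = P + 2|s\<cdot>n|\<close>\<close>
  define K where "K = 1 + 2 * \<bar>snrm\<bar> / P"
  have K: "K \<ge> 1" and KP: "K * P = P + 2 * \<bar>snrm\<bar>" using P by (simp_all add: K_def field_simps)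
  obtain W where W: "real_posdef W" and det: "det W = 1 + (K^2 - 1) / P * P"
    and sw: "s_weight W = P * (1 + (K^2 - 1) / P * P)"
    using rank_one_update_posdef[of "(K^2 - 1) / P" "s \<bullet> d 2" "- (s \<bullet> d 1)"] K P
    by (auto simp: s_weight_def P_def add.commute one_le_power)
  have sqrt_det: "sqrt (det W) = K" using det P K by simp
  have sw': "s_weight W = P * K^2" using sw P by simp
  define D where "D = nrm2 - snrm^2"
  have D: "D > 0" using snrm_sq_less by (simp add: D_def)
  have "2 * (1 - s \<bullet> s) * \<bar>snrm\<bar> * K < P * K^2"
  proof -
    have "P * K^2 - 2 * (1 - s \<bullet> s) * \<bar>snrm\<bar> * K = K * (K * P - 2 * \<bar>snrm\<bar> + 2 * (s \<bullet> s) * \<bar>snrm\<bar>)"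
      by (simp add: algebra_simps power2_eq_square)
    also have "\<dots> = K * (P + 2 * (s \<bullet> s) * \<bar>snrm\<bar>)" by (simp add: KP)
    also have "\<dots> > 0" using K P by (simp add: add_pos_nonneg)
    finally show ?thesis by simp
  qed
  moreover have "RLD_bound \<rho> \<theta> W = ((1 - s \<bullet> s) * adj_gram_weight W + 2 * (1 - s \<bullet> s) * \<bar>snrm\<bar> * K) / D"
    using RLD_bound_bloch[OF real_posdef_sym[OF W] real_posdef_det_nonneg[OF W]] sqrt_det
    by (simp add: D_def algebra_simps)
  ultimately have "RLD_bound \<rho> \<theta> W < ((1 - s \<bullet> s) * adj_gram_weight W + s_weight W) / D"
    using D by (simp add: sw' divide_strict_right_mono)
  also have "\<dots> \<le> Holevo_bound \<rho> \<theta> W"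
    unfolding Holevo_bound_bloch[OF W]
  proof (rule cInf_greatest)
    show "holevo_fn W ` Collect dual \<noteq> {}" using dual_recip by blast
    fix y assume "y \<in> holevo_fn W ` Collect dual"
    then obtain x where x: "dual x" and y: "y = holevo_fn W x" by blast
    have "0 \<le> 2 * \<bar>s \<bullet> (x 1 \<times> x 2)\<bar> * sqrt (det W)" using real_posdef_det_nonneg[OF W] by simp
    then show "((1 - s \<bullet> s) * adj_gram_weight W + s_weight W) / D \<le> y"
      using weighted_cov_lower_bound[OF W x] unfolding y holevo_fn_def D_def by linarith
  qed
  finally show ?thesis using W by blast
qed

theorem Holevo_eq_RLD_iff_D_invariant:
  "(\<forall>W. real_posdef W \<longrightarrow> Holevo_bound \<rho> \<theta> W = RLD_bound \<rho> \<theta> W) \<longleftrightarrow> D_invariant \<rho> \<theta>"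
  using Holevo_eq_RLD_if_orthogonal Holevo_gt_RLD_if_not_orthogonal
  unfolding D_invariant_iff_orthogonal by fastforce

end

section \<open>Regular models\<close>

lemma pd_herm_traceless:
  assumes "open \<Theta>" and "\<theta> \<in> \<Theta>" and "\<rho> differentiable (at \<theta>)"
    and "\<And>x. x \<in> \<Theta> \<Longrightarrow> herm (\<rho> x) \<and> trace (\<rho> x) = 1"
  shows "herm (pd \<rho> \<theta> i)" and "trace (pd \<rho> \<theta> i) = 0"
proof -
  define D where "D = frechet_derivative \<rho> (at \<theta>)"
  have D: "(\<rho> has_derivative D) (at \<theta>)"
    using assms(3) unfolding D_def by (simp add: frechet_derivative_works)
  have "((\<lambda>x. cadj (\<rho> x)) has_derivative (\<lambda>v. cadj (D v))) (at \<theta>)"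
    by (rule bounded_linear.has_derivative[OF bounded_linear_cadj D])
  then have "(\<rho> has_derivative (\<lambda>v. cadj (D v))) (at \<theta>)"
    by (rule has_derivative_transform_within_open[OF _ assms(1,2)]) (use assms(4) in \<open>simp add: herm_def\<close>)
  then have "(\<lambda>v. cadj (D v)) = D" using D by (rule has_derivative_unique)
  then show "herm (pd \<rho> \<theta> i)" unfolding herm_def pd_def D_def[symmetric] by metis
  have "((\<lambda>x. trace (\<rho> x)) has_derivative (\<lambda>v. trace (D v))) (at \<theta>)"
    by (rule bounded_linear.has_derivative[OF bounded_linear_trace D])
  then have "((\<lambda>x. 1) has_derivative (\<lambda>v. trace (D v))) (at \<theta>)"
    by (rule has_derivative_transform_within_open[OF _ assms(1,2)]) (use assms(4) in simp)
  then have "(\<lambda>v. trace (D v)) = (\<lambda>v. 0)" by (rule has_derivative_unique[OF _ has_derivative_const])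
  then show "trace (pd \<rho> \<theta> i) = 0" unfolding pd_def D_def[symmetric] by metis
qed

lemma regular_model_obtain_bloch:
  assumes "regular_model \<Theta> \<rho>" and "\<theta> \<in> \<Theta>"
  obtains s d where "qubit_model_at \<rho> \<theta> s d"
proof -
  have \<Theta>: "open \<Theta>" and dens: "\<And>x. x \<in> \<Theta> \<Longrightarrow> density (\<rho> x)" and "smooth_on \<Theta> \<rho>"
    and indep: "\<And>a b. a *\<^sub>R pd \<rho> \<theta> 1 + b *\<^sub>R pd \<rho> \<theta> 2 = 0 \<Longrightarrow> a = 0 \<and> b = 0"
    using assms unfolding regular_model_def by auto
  then have diff: "\<rho> differentiable (at \<theta>)" using assms(2) by (auto elim: smooth_on.cases)
  obtain s where state: "\<rho> \<theta> = bloch (1/2) ((1/2) *\<^sub>R s)" and inside: "s \<bullet> s < 1"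
    using dens[OF assms(2)] by (rule density_obtain_bloch)
  have "\<exists>e. pd \<rho> \<theta> i = bloch 0 ((1/2) *\<^sub>R e)" for i
  proof -
    note pd = pd_herm_traceless[OF \<Theta> assms(2) diff, of i]
    obtain a x where ax: "pd \<rho> \<theta> i = bloch a x"
      using pd(1) dens by (auto simp: density_def strictly_pos_def elim: herm_obtain_bloch)
    then have "a = 0" using pd(2) dens by (auto simp: density_def strictly_pos_def trace_bloch)
    then have "pd \<rho> \<theta> i = bloch 0 ((1/2) *\<^sub>R (2 *\<^sub>R x))" by (simp add: ax)
    then show ?thesis by blast
  qed
  then obtain d where pd: "\<And>i. pd \<rho> \<theta> i = bloch 0 ((1/2) *\<^sub>R d i)" by metis
  have cross: "d 1 \<times> d 2 \<noteq> 0"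
  proof (rule cross_nonzero_if_independent)
    fix a b assume ab: "a *\<^sub>R d 1 + b *\<^sub>R d 2 = 0"
    have "a *\<^sub>R pd \<rho> \<theta> 1 + b *\<^sub>R pd \<rho> \<theta> 2 = bloch 0 ((1/2) *\<^sub>R (a *\<^sub>R d 1 + b *\<^sub>R d 2))"
      by (simp add: pd scaleR_bloch bloch_add algebra_simps)
    then have "a *\<^sub>R pd \<rho> \<theta> 1 + b *\<^sub>R pd \<rho> \<theta> 2 = 0" by (simp add: ab bloch_zero)
    then show "a = 0 \<and> b = 0" by (rule indep)
  qed
  have "qubit_model_at \<rho> \<theta> s d" using state inside pd cross by unfold_locales
  then show ?thesis by (rule that)
qed

theorem proposition2:
  fixes \<Theta> :: "(real^2) set" and \<rho> :: "real^2 \<Rightarrow> complex^2^2" and \<theta> :: "real^2"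
  assumes "regular_model \<Theta> \<rho>" and "\<theta> \<in> \<Theta>"
  shows "(\<forall>W. real_posdef W \<longrightarrow> Holevo_bound \<rho> \<theta> W = RLD_bound \<rho> \<theta> W)
         \<longleftrightarrow> D_invariant \<rho> \<theta>"
proof -
  obtain s d where "qubit_model_at \<rho> \<theta> s d" using regular_model_obtain_bloch[OF assms] .
  then show ?thesis by (rule qubit_model_at.Holevo_eq_RLD_iff_D_invariant)
qed

end
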